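(* There is a constant $C$ such that every path restricted ordered bipartite graph $G=(U,V,E)$ with $n=|U|+|V|\ge 2$ vertices satisfies $|E|\le n\log_2 n + Cn$. Moreover, this bound is tight up to the constant factor: there is a constant $c>0$ such that for every $n\ge 2$ there exists a path restricted ordered bipartite graph on $n$ vertices with at least $c\,n\log n$ edges.
   Context: An ordered bipartite graph is a triple $G=(U,V,E)$ where $U$ and $V$ are disjoint finite sets, each equipped with a total order (both denoted $<$), and $E\subseteq U\times V$ is a set of edges. A forward path in $G$ is a sequence $w_0,w_1,\dots,w_m$ ($m\ge1$) of distinct vertices alternating between $U$ and $V$, with $\{w_{k-1},w_k\}\in E$ for all $k$, such that the vertices of the sequence lying in $U$ appear in strictly increasing order along the sequence and the vertices lying in $V$ also appear in strictly increasing order along the sequence (a path whose $U$-vertices and $V$-vertices are both strictly decreasing is the same path read in reverse). The range of the forward path is the pair of intervals $\langle u_a,u_b\rangle=\{u\in U: u_a\le u\le u_b\}$ and $\langle v_c,v_d\rangle=\{v\in V: v_c\le v\le v_d\}$, where $u_a,u_b$ (resp. $v_c,v_d$) are the smallest and largest $U$-vertices (resp. $V$-vertices) on the path. A back edge to such a forward path is an edge $\{w_0,x\}\in E$ where $x$ lies in the part ($U$ or $V$) not containing $w_0$ and $w_1 < x \le M$, with $M$ the largest vertex of the path in that part (so $x$ lies in the range of the path). $G$ has the path restricted property, and is called a path restricted ordered bipartite graph (PRBG), if no forward path in $G$ has a back edge in $E$. *)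

theory Defs
  imports Complex_Main
begin

text \<open>An ordered bipartite graph (U,V,E): U and V are finite sets of naturals
 (every finite total order is isomorphic to one), ordered by the natural order.
 Vertices are tagged: Inl u for u in U, Inr v for v in V, so U and V are disjoint.\<close>

type_synonym vtx = "nat + nat"

fun adj :: "(nat \<times> nat) set \<Rightarrow> vtx \<Rightarrow> vtx \<Rightarrow> bool" where
  "adj E (Inl u) (Inr v) = ((u, v) \<in> E)"
| "adj E (Inr v) (Inl u) = ((u, v) \<in> E)"
| "adj E _ _ = False"

fun lefts :: "vtx list \<Rightarrow> nat list" where
  "lefts [] = []"
| "lefts (Inl u # ws) = u # lefts ws"
| "lefts (Inr v # ws) = lefts ws"

fun rights :: "vtx list \<Rightarrow> nat list" where
  "rights [] = []"
| "rights (Inl u # ws) = rights ws"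
| "rights (Inr v # ws) = v # rights ws"

definition vertices :: "nat set \<Rightarrow> nat set \<Rightarrow> vtx set" where
  "vertices U V = Inl ` U \<union> Inr ` V"

text \<open>Forward path w_0,...,w_m (m \<ge> 1): distinct vertices, consecutive ones adjacent
 (which forces alternation between U and V), U-vertices strictly increasing along
 the sequence, V-vertices strictly increasing along the sequence.\<close>
definition forward_path :: "nat set \<Rightarrow> nat set \<Rightarrow> (nat \<times> nat) set \<Rightarrow> vtx list \<Rightarrow> bool" where
  "forward_path U V E ws \<longleftrightarrow>
     length ws \<ge> 2 \<and> distinct ws \<and> set ws \<subseteq> vertices U V \<and>
     (\<forall>k. 0 < k \<and> k < length ws \<longrightarrow> adj E (ws ! (k - 1)) (ws ! k)) \<and>
     sorted_wrt (<) (lefts ws) \<and> sorted_wrt (<) (rights ws)"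

definition has_back_edge :: "(nat \<times> nat) set \<Rightarrow> vtx list \<Rightarrow> bool" where
  "has_back_edge E ws \<longleftrightarrow>
     (case (ws ! 0, ws ! 1) of
        (Inl u0, Inr v1) \<Rightarrow> (\<exists>v. (u0, v) \<in> E \<and> v1 < v \<and> v \<le> Max (set (rights ws)))
      | (Inr v0, Inl u1) \<Rightarrow> (\<exists>u. (u, v0) \<in> E \<and> u1 < u \<and> u \<le> Max (set (lefts ws)))
      | _ \<Rightarrow> False)"

definition prbg :: "nat set \<Rightarrow> nat set \<Rightarrow> (nat \<times> nat) set \<Rightarrow> bool" where
  "prbg U V E \<longleftrightarrow> finite U \<and> finite V \<and> E \<subseteq> U \<times> V \<and>
     \<not> (\<exists>ws. forward_path U V E ws \<and> has_back_edge E ws)"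

end

theory Submission
  imports Defs "HOL-Library.Discrete_Functions"
begin

text \<open>An edge \<open>(r, c)\<close> is final if \<open>c\<close> is the last neighbour of \<open>r\<close>; there are
  at most \<open>|U|\<close> such edges. Otherwise its gap is the number of \<open>V\<close>-vertices from \<open>c\<close> up to the
  next neighbour of \<open>r\<close>, and its level is \<open>\<lfloor>log\<^sub>2 gap\<rfloor>\<close>. If \<open>r0 < r\<close> are both adjacent to
  \<open>c\<close> and \<open>c < d\<close> is another neighbour of \<open>r\<close>, the forward path \<open>r0, c, r, d'\<close>, with \<open>d'\<close> the
  next neighbour of \<open>r\<close> after \<open>d\<close>, has no back edge; so the gap at \<open>(r0, c)\<close> exceeds the gaps
  at \<open>(r, c)\<close> and \<open>(r, d)\<close> together. Hence on one level, the edges other than the lowest one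
  at each \<open>V\<close>-vertex have distinct \<open>U\<close>-vertices, a level has at most \<open>|U| + |V|\<close> edges, and
  there are at most \<open>\<lfloor>log\<^sub>2 |V|\<rfloor> + 1\<close> levels.

  Gluing a copy of a PRBG on \<open>[N] \<times> [N]\<close> with \<open>V\<close> shifted by \<open>N\<close>, a copy with
  \<open>U\<close> shifted by \<open>N\<close>, and the matching \<open>{(u, u) | u < N}\<close> gives a PRBG on \<open>[2N] \<times> [2N]\<close>.
  A forward path that starts in one copy stays in it, and strictly monotone relabelling
  preserves the path restriction. A path starting with a matching edge \<open>(u, u)\<close> continues
  in the copy with shifted \<open>U\<close>, so all its \<open>V\<close>-vertices stay below \<open>N\<close>, whereas a back edge
  at \<open>u\<close> would end above \<open>N\<close>. Doubling \<open>k\<close> times from a single edge gives \<open>2\<^sup>k (k + 2) / 2\<close>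
  edges on \<open>2\<^sup>k\<^sup>+\<^sup>1\<close> vertices.\<close>

section \<open>Forward paths\<close>

lemma set_lefts: "u \<in> set (lefts ws) \<longleftrightarrow> Inl u \<in> set ws"
  by (induction ws rule: lefts.induct) auto

lemma set_rights: "v \<in> set (rights ws) \<longleftrightarrow> Inr v \<in> set ws"
  by (induction ws rule: rights.induct) auto

lemma lefts_nth_less:
  assumes "sorted_wrt (<) (lefts ws)" "i < j" "j < length ws" "ws ! i = Inl a" "ws ! j = Inl b"
  shows "a < b"
  using assms
proof (induction ws arbitrary: i j)
  case Nil
  then show ?case by simp
next
  case (Cons w ws)
  obtain j' where j': "j = Suc j'" using Cons.prems(2) by (cases j) auto
  show ?case
  proof (cases i)
    case 0
    have "Inl b \<in> set ws" using Cons.prems(3,5) j' by (metis Suc_less_eq nth_Cons_Suc nth_mem length_Cons)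
    then show ?thesis using Cons.prems(1,4) 0 by (simp add: set_lefts)
  next
    case (Suc i')
    have "sorted_wrt (<) (lefts ws)" using Cons.prems(1) by (cases w) auto
    then show ?thesis using Cons.IH[of i' j'] Cons.prems Suc j' by simp
  qed
qed

lemma adj_cases:
  assumes "adj E a b"
  obtains u v where "a = Inl u" "b = Inr v" "(u, v) \<in> E"
    | u v where "a = Inr v" "b = Inl u" "(u, v) \<in> E"
  using assms by (cases a; cases b) auto

lemma in_vertices_iff [simp]:
  "Inl u \<in> vertices U V \<longleftrightarrow> u \<in> U" "Inr v \<in> vertices U V \<longleftrightarrow> v \<in> V"
  by (auto simp: vertices_def)

lemma vertices_UNIV [simp]: "vertices UNIV UNIV = UNIV"
  by (auto simp: vertices_def) (metis range_eqI sum.exhaust)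

lemma adj_in_vertices: "adj E a b \<Longrightarrow> E \<subseteq> U \<times> V \<Longrightarrow> a \<in> vertices U V \<and> b \<in> vertices U V"
  by (cases a; cases b) auto

lemma adj_restrict:
  "adj E a b \<Longrightarrow> a \<in> vertices U V \<Longrightarrow> b \<in> vertices U V \<Longrightarrow> E \<inter> U \<times> V \<subseteq> H \<Longrightarrow> adj H a b"
  by (cases a; cases b) auto

lemma forward_pathD:
  assumes "forward_path U V E ws"
  shows "2 \<le> length ws" "distinct ws" "set ws \<subseteq> vertices U V"
    "\<And>k. 0 < k \<Longrightarrow> k < length ws \<Longrightarrow> adj E (ws ! (k - 1)) (ws ! k)"
    "sorted_wrt (<) (lefts ws)" "sorted_wrt (<) (rights ws)"
  using assms by (simp_all add: forward_path_def)

lemma forward_path_in_region: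
  "set ws \<subseteq> vertices U V \<Longrightarrow> forward_path U' V' E ws \<Longrightarrow> forward_path U V E ws"
  unfolding forward_path_def by blast

lemma forward_path_UNIV: "forward_path U V E ws \<Longrightarrow> forward_path UNIV UNIV E ws"
  by (rule forward_path_in_region) simp

lemma forward_path_in_vertices:
  assumes path: "forward_path U' V' E ws" and E: "E \<subseteq> U \<times> V"
  shows "set ws \<subseteq> vertices U V"
proof
  fix w assume "w \<in> set ws"
  then obtain k where k: "k < length ws" "ws ! k = w" by (auto simp: in_set_conv_nth)
  show "w \<in> vertices U V"
  proof (cases k)
    case 0
    then show ?thesis
      using adj_in_vertices[OF forward_pathD(4)[OF path, of 1] E] forward_pathD(1)[OF path] k by simp
  next
    case (Suc k')
    then show ?thesis using adj_in_vertices[OF forward_pathD(4)[OF path, of k] E] k by simp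
  qed
qed

lemma forward_path_restrict:
  assumes "forward_path U V E ws" "E \<inter> U \<times> V \<subseteq> H"
  shows "forward_path U V H ws"
  using assms unfolding forward_path_def
  by (metis adj_restrict less_imp_diff_less nth_mem subsetD)

lemma has_back_edge_mono: "E \<subseteq> F \<Longrightarrow> has_back_edge E ws \<Longrightarrow> has_back_edge F ws"
  by (cases "ws ! 0"; cases "ws ! 1") (auto simp: has_back_edge_def)

definition no_back_edge :: "(nat \<times> nat) set \<Rightarrow> bool" where
  "no_back_edge E \<longleftrightarrow> (\<forall>ws. forward_path UNIV UNIV E ws \<longrightarrow> \<not> has_back_edge E ws)"

lemma prbg_iff:
  "prbg U V E \<longleftrightarrow> finite U \<and> finite V \<and> E \<subseteq> U \<times> V \<and> no_back_edge E"
proof (cases "E \<subseteq> U \<times> V")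
  case True
  then have "forward_path U V E ws \<longleftrightarrow> forward_path UNIV UNIV E ws" for ws
    using forward_path_UNIV forward_path_in_region forward_path_in_vertices by metis
  then show ?thesis by (auto simp: prbg_def no_back_edge_def)
qed (simp add: prbg_def)

lemma no_back_edge_in_region:
  assumes "no_back_edge H" "G \<inter> A \<times> B \<subseteq> H"
    and "forward_path UNIV UNIV G ws" "set ws \<subseteq> vertices A B"
  shows "\<not> has_back_edge (G \<inter> A \<times> B) ws"
proof
  assume "has_back_edge (G \<inter> A \<times> B) ws"
  then have "has_back_edge H ws" by (rule has_back_edge_mono[OF assms(2)])
  moreover have "forward_path UNIV UNIV H ws"
    using forward_path_restrict[OF forward_path_in_region[OF assms(4,3)] assms(2)]
    by (rule forward_path_UNIV)
  ultimately show False using assms(1) by (simp add: no_back_edge_def)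
qed

lemma no_back_edge_four_path:
  assumes E: "no_back_edge E" and "r0 < r" "(r0, c) \<in> E" "(r, c) \<in> E" "(r, v) \<in> E" "c < v"
    and "(r0, x) \<in> E" "c < x"
  shows "v < x"
proof (rule ccontr)
  assume "\<not> v < x"
  let ?ws = "[Inl r0, Inr c, Inl r, Inr v]"
  have "forward_path UNIV UNIV E ?ws"
    unfolding forward_path_def
  proof (intro conjI allI impI)
    fix k assume "0 < k \<and> k < length ?ws"
    then have "k = 1 \<or> k = 2 \<or> k = 3" by auto
    then show "adj E (?ws ! (k - 1)) (?ws ! k)" using assms by auto
  qed (use assms in auto)
  moreover have "has_back_edge E ?ws"
    using assms \<open>\<not> v < x\<close> by (auto simp: has_back_edge_def max_def)
  ultimately show False using E by (auto simp: no_back_edge_def)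
qed

section \<open>Symmetry and relabelling\<close>

definition mirror :: "vtx \<Rightarrow> vtx" where
  "mirror = case_sum Inr Inl"

lemma mirror_simps [simp]: "mirror (Inl u) = Inr u" "mirror (Inr v) = Inl v"
  by (simp_all add: mirror_def)

lemma mirror_mirror [simp]: "mirror (mirror w) = w"
  by (cases w) simp_all

lemma inj_mirror: "inj mirror"
  by (metis injI mirror_mirror)

lemma lefts_map_mirror [simp]: "lefts (map mirror ws) = rights ws"
  by (induction ws rule: rights.induct) simp_all

lemma rights_map_mirror [simp]: "rights (map mirror ws) = lefts ws"
  by (induction ws rule: lefts.induct) simp_all

lemma adj_converse_mirror [simp]: "adj (E\<inverse>) (mirror a) (mirror b) = adj E a b"
  by (cases a; cases b) simp_all

lemma mirror_in_vertices [simp]: "mirror w \<in> vertices V U \<longleftrightarrow> w \<in> vertices U V"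
  by (cases w) simp_all

lemma forward_path_mirror:
  "forward_path V U (E\<inverse>) (map mirror ws) \<longleftrightarrow> forward_path U V E ws"
  by (auto simp: forward_path_def distinct_map inj_on_subset[OF inj_mirror])

lemma has_back_edge_mirror:
  assumes "2 \<le> length ws"
  shows "has_back_edge (E\<inverse>) (map mirror ws) \<longleftrightarrow> has_back_edge E ws"
proof -
  have "map mirror ws ! 0 = mirror (ws ! 0)" "map mirror ws ! 1 = mirror (ws ! 1)"
    using assms by (auto intro!: nth_map)
  then show ?thesis
    by (cases "ws ! 0"; cases "ws ! 1") (auto simp: has_back_edge_def)
qed

lemma no_back_edge_converse: "no_back_edge (E\<inverse>) \<longleftrightarrow> no_back_edge E"
proof -
  have "no_back_edge (E\<inverse>)" if "no_back_edge E" for E :: "(nat \<times> nat) set"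
    unfolding no_back_edge_def
  proof (intro allI impI)
    fix ws assume path: "forward_path UNIV UNIV (E\<inverse>) ws"
    then have "forward_path UNIV UNIV E (map mirror ws)"
      using forward_path_mirror[of UNIV UNIV "E\<inverse>" ws] by simp
    then have "\<not> has_back_edge E (map mirror ws)" using that by (simp add: no_back_edge_def)
    then show "\<not> has_back_edge (E\<inverse>) ws"
      using has_back_edge_mirror[OF forward_pathD(1)[OF path], of "E\<inverse>"] by simp
  qed
  then show ?thesis by (metis converse_converse)
qed

lemma rights_nth_less:
  assumes "sorted_wrt (<) (rights ws)" "i < j" "j < length ws" "ws ! i = Inr a" "ws ! j = Inr b"
  shows "a < b"
  using lefts_nth_less[of "map mirror ws" i j a b] assms by simp

lemma lefts_map_sum [simp]: "lefts (map (map_sum f g) ws) = map f (lefts ws)"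
  by (induction ws rule: lefts.induct) simp_all

lemma rights_map_sum [simp]: "rights (map (map_sum f g) ws) = map g (rights ws)"
  by (induction ws rule: rights.induct) simp_all

lemma adj_map_prod:
  "inj f \<Longrightarrow> inj g \<Longrightarrow> adj (map_prod f g ` E) (map_sum f g a) (map_sum f g b) \<longleftrightarrow> adj E a b"
  by (cases a; cases b) (auto simp: inj_eq)

lemma sorted_wrt_less_map_strict_mono:
  fixes f :: "'a::linorder \<Rightarrow> 'b::linorder"
  assumes "strict_mono f"
  shows "sorted_wrt (<) (map f xs) \<longleftrightarrow> sorted_wrt (<) xs"
proof -
  have "(\<lambda>x y. f x < f y) = (<)"
    using strict_mono_less[OF assms] by (intro ext) simp
  then show ?thesis by (simp add: sorted_wrt_map)
qed

lemma forward_path_map: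
  assumes "strict_mono f" "strict_mono g"
  shows "forward_path UNIV UNIV (map_prod f g ` E) (map (map_sum f g) ws) \<longleftrightarrow> forward_path UNIV UNIV E ws"
proof -
  have "inj f" "inj g" using assms strict_mono_imp_inj_on by blast+
  then have "inj_on (map_sum f g) A" for A
    using inj_on_subset[OF sum.inj_map subset_UNIV] by blast
  then show ?thesis
    using assms \<open>inj f\<close> \<open>inj g\<close>
    by (auto simp: forward_path_def distinct_map adj_map_prod sorted_wrt_less_map_strict_mono)
qed

lemma has_back_edge_map:
  fixes f g :: "nat \<Rightarrow> nat"
  assumes f: "strict_mono f" and g: "strict_mono g" and len: "2 \<le> length ws"
  shows "has_back_edge (map_prod f g ` E) (map (map_sum f g) ws) \<longleftrightarrow> has_back_edge E ws"
proof -
  let ?ws = "map (map_sum f g) ws"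
  have nth: "?ws ! 0 = map_sum f g (ws ! 0)" "?ws ! 1 = map_sum f g (ws ! 1)"
    using len by (auto intro!: nth_map)
  have "ws ! 1 \<in> set ws" using len by simp
  then have "ws ! 1 = Inl u \<Longrightarrow> set (lefts ws) \<noteq> {}" "ws ! 1 = Inr v \<Longrightarrow> set (rights ws) \<noteq> {}"
    for u v by (metis empty_iff set_lefts, metis empty_iff set_rights)
  then have Max_lefts: "ws ! 1 = Inl u \<Longrightarrow> Max (set (lefts ?ws)) = f (Max (set (lefts ws)))"
    and Max_rights: "ws ! 1 = Inr v \<Longrightarrow> Max (set (rights ?ws)) = g (Max (set (rights ws)))"
    for u v by (simp_all add: mono_Max_commute[OF strict_mono_mono[OF f]]
      mono_Max_commute[OF strict_mono_mono[OF g]])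
  have "inj f" "inj g" using f g strict_mono_imp_inj_on by blast+
  have ex_V: "(\<exists>x. (f u, x) \<in> map_prod f g ` E \<and> P x) \<longleftrightarrow> (\<exists>x. (u, x) \<in> E \<and> P (g x))"
    and ex_U: "(\<exists>x. (x, g v) \<in> map_prod f g ` E \<and> Q x) \<longleftrightarrow> (\<exists>x. (x, v) \<in> E \<and> Q (f x))"
    for u v P Q using \<open>inj f\<close> \<open>inj g\<close> by (auto simp: inj_eq)
  show ?thesis
    using nth Max_lefts Max_rights
    by (cases "ws ! 0"; cases "ws ! 1")
      (simp_all add: has_back_edge_def ex_U ex_V strict_mono_less[OF f] strict_mono_less[OF g]
        strict_mono_less_eq[OF f] strict_mono_less_eq[OF g])
qed

lemma no_back_edge_image:
  fixes f g :: "nat \<Rightarrow> nat"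
  assumes f: "strict_mono f" and g: "strict_mono g" and E: "no_back_edge E"
  shows "no_back_edge (map_prod f g ` E)"
  unfolding no_back_edge_def
proof (intro allI impI)
  fix ws assume path: "forward_path UNIV UNIV (map_prod f g ` E) ws"
  have "set ws \<subseteq> vertices (range f) (range g)"
    by (rule forward_path_in_vertices[OF path]) auto
  also have "vertices (range f) (range g) = range (map_sum f g)"
    by (force simp: vertices_def image_iff map_sum_def split: sum.splits)
  finally have "\<exists>ws'. ws = map (map_sum f g) ws'"
    unfolding ex_map_conv by blast
  then obtain ws' where ws': "ws = map (map_sum f g) ws'" ..
  have "2 \<le> length ws'" using forward_pathD(1)[OF path] ws' by simp
  moreover have "forward_path UNIV UNIV E ws'"
    using path forward_path_map[OF f g] ws' by simp
  ultimately show "\<not> has_back_edge (map_prod f g ` E) ws"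
    using E has_back_edge_map[OF f g] ws' by (simp add: no_back_edge_def)
qed

section \<open>The upper bound\<close>

lemma inj_on_fstI: "(\<And>r c d. (r, c) \<in> S \<Longrightarrow> (r, d) \<in> S \<Longrightarrow> c = d) \<Longrightarrow> inj_on fst S"
  by (rule inj_onI) (metis prod.collapse)

lemma card_le_add_if_inj_on_fst_nonlowest:
  fixes S :: "('a::linorder \<times> 'b) set"
  assumes "S \<subseteq> A \<times> B" "finite A" "finite B"
    and inj: "inj_on fst {(r, c) \<in> S. \<exists>r0 < r. (r0, c) \<in> S}"
  shows "card S \<le> card A + card B"
proof -
  let ?L = "{(r, c) \<in> S. \<forall>r0 < r. (r0, c) \<notin> S}"
  let ?H = "{(r, c) \<in> S. \<exists>r0 < r. (r0, c) \<in> S}"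
  have "inj_on snd ?L"
  proof (rule inj_onI)
    fix x y assume x: "x \<in> ?L" and y: "y \<in> ?L" and "snd x = snd y"
    then obtain r r' c where xy: "x = (r, c)" "y = (r', c)" by (metis prod.collapse)
    then have "\<not> r < r'" "\<not> r' < r" using x y by auto
    then show "x = y" using xy by simp
  qed
  then have "card ?L \<le> card B"
    by (rule card_inj_on_le[OF _ _ assms(3)]) (use assms(1) in auto)
  moreover have "card ?H \<le> card A"
    by (rule card_inj_on_le[OF inj _ assms(2)]) (use assms(1) in auto)
  moreover have "S = ?L \<union> ?H" by auto
  then have "card S \<le> card ?L + card ?H" using card_Un_le[of ?L ?H] by simp
  ultimately show ?thesis by linarith
qed

definition rank :: "nat set \<Rightarrow> nat \<Rightarrow> nat" where
  "rank V c = card {x \<in> V. x < c}"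

lemma rank_less: "finite V \<Longrightarrow> c \<in> V \<Longrightarrow> c < c' \<Longrightarrow> rank V c < rank V c'"
  unfolding rank_def by (rule psubset_card_mono) auto

lemma rank_mono: "finite V \<Longrightarrow> c \<le> c' \<Longrightarrow> rank V c \<le> rank V c'"
  unfolding rank_def by (rule card_mono) auto

lemma rank_less_card: "finite V \<Longrightarrow> c \<in> V \<Longrightarrow> rank V c < card V"
  unfolding rank_def by (rule psubset_card_mono) auto

locale prbg_graph =
  fixes U V :: "nat set" and E :: "(nat \<times> nat) set"
  assumes finite_U: "finite U" and finite_V: "finite V" and edges_subset: "E \<subseteq> U \<times> V"
    and no_back_edge: "no_back_edge E"
begin

definition later_nbrs :: "nat \<Rightarrow> nat \<Rightarrow> nat set" where
  "later_nbrs r c = {c'. (r, c') \<in> E \<and> c < c'}"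

definition next_nbr :: "nat \<Rightarrow> nat \<Rightarrow> nat" where
  "next_nbr r c = Min (later_nbrs r c)"

definition gap :: "nat \<Rightarrow> nat \<Rightarrow> nat" where
  "gap r c = rank V (next_nbr r c) - rank V c"

lemma finite_E: "finite E"
  using finite_subset[OF edges_subset] finite_U finite_V by blast

lemma finite_later_nbrs: "finite (later_nbrs r c)"
proof -
  have "later_nbrs r c \<subseteq> V" using edges_subset by (auto simp: later_nbrs_def)
  then show ?thesis using finite_V by (rule finite_subset)
qed

lemma next_nbr:
  assumes "later_nbrs r c \<noteq> {}"
  shows "(r, next_nbr r c) \<in> E" "c < next_nbr r c"
  using Min_in[OF finite_later_nbrs assms] by (simp_all add: next_nbr_def later_nbrs_def)

lemma next_nbr_le: "(r, c') \<in> E \<Longrightarrow> c < c' \<Longrightarrow> next_nbr r c \<le> c'"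
  unfolding next_nbr_def by (rule Min_le[OF finite_later_nbrs]) (simp add: later_nbrs_def)

lemma rank_next_nbr:
  assumes "(r, c) \<in> E" "later_nbrs r c \<noteq> {}"
  shows "rank V (next_nbr r c) = rank V c + gap r c" "0 < gap r c" "gap r c < card V"
proof -
  have "c \<in> V" "next_nbr r c \<in> V" using assms(1) next_nbr(1)[OF assms(2)] edges_subset by auto
  then have "rank V c < rank V (next_nbr r c)" "rank V (next_nbr r c) < card V"
    using rank_less rank_less_card finite_V next_nbr(2)[OF assms(2)] by auto
  then show "rank V (next_nbr r c) = rank V c + gap r c" "0 < gap r c" "gap r c < card V"
    by (auto simp: gap_def)
qed

lemma gap_add_less:
  assumes "r0 < r" "(r0, c) \<in> E" "(r, c) \<in> E" "(r, d) \<in> E" "c < d"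
    and "later_nbrs r0 c \<noteq> {}" "later_nbrs r d \<noteq> {}"
  shows "gap r c + gap r d < gap r0 c"
proof -
  have c: "later_nbrs r c \<noteq> {}" using assms(4,5) by (auto simp: later_nbrs_def)
  have "next_nbr r d < next_nbr r0 c"
  proof (rule no_back_edge_four_path[OF no_back_edge assms(1-3)])
    show "(r, next_nbr r d) \<in> E" "(r0, next_nbr r0 c) \<in> E" "c < next_nbr r0 c"
      using next_nbr[OF assms(7)] next_nbr[OF assms(6)] by auto
    show "c < next_nbr r d" using next_nbr(2)[OF assms(7)] assms(5) by simp
  qed
  then have "rank V (next_nbr r d) < rank V (next_nbr r0 c)"
    using next_nbr(1)[OF assms(7)] edges_subset by (intro rank_less finite_V) auto
  moreover have "rank V (next_nbr r c) \<le> rank V d"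
    using next_nbr_le[OF assms(4,5)] by (rule rank_mono[OF finite_V])
  ultimately show ?thesis
    using rank_next_nbr(1)[OF assms(2,6)] rank_next_nbr(1)[OF assms(3) c]
      rank_next_nbr(1)[OF assms(4,7)] by linarith
qed

definition final_edges :: "(nat \<times> nat) set" where
  "final_edges = {(r, c) \<in> E. later_nbrs r c = {}}"

definition level_edges :: "nat \<Rightarrow> (nat \<times> nat) set" where
  "level_edges k = {(r, c) \<in> E. later_nbrs r c \<noteq> {} \<and> floor_log (gap r c) = k}"

lemma level_edges_gap:
  assumes "(r, c) \<in> level_edges k"
  shows "2 ^ k \<le> gap r c" "gap r c < 2 * 2 ^ k"
proof -
  have "0 < gap r c" "floor_log (gap r c) = k"
    using assms rank_next_nbr(2) by (auto simp: level_edges_def)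
  then show "2 ^ k \<le> gap r c" "gap r c < 2 * 2 ^ k"
    using floor_log_exp2_le floor_log_exp2_gt by metis+
qed

lemma card_final_edges: "card final_edges \<le> card U"
proof (rule card_inj_on_le[OF _ _ finite_U])
  have "c = d" if "(r, c) \<in> final_edges" "(r, d) \<in> final_edges" for r c d
    using that by (auto simp: final_edges_def later_nbrs_def) (meson linorder_neqE_nat)
  then show "inj_on fst final_edges"
    by (rule inj_on_fstI)
  show "fst ` final_edges \<subseteq> U" using edges_subset by (auto simp: final_edges_def)
qed

lemma card_level_edges: "card (level_edges k) \<le> card U + card V"
proof (rule card_le_add_if_inj_on_fst_nonlowest)
  show "level_edges k \<subseteq> U \<times> V" using edges_subset by (auto simp: level_edges_def)
  let ?H = "{(r, c) \<in> level_edges k. \<exists>r0 < r. (r0, c) \<in> level_edges k}"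
  have False if rc: "(r, c) \<in> ?H" and rd: "(r, d) \<in> ?H" and "c < d" for r c d
  proof -
    obtain r0 where r0: "r0 < r" "(r0, c) \<in> level_edges k" using rc by force
    have "gap r c + gap r d < gap r0 c"
      using that r0 by (intro gap_add_less) (auto simp: level_edges_def)
    moreover have "(r, c) \<in> level_edges k" "(r, d) \<in> level_edges k" using rc rd by auto
    ultimately show False
      using level_edges_gap(1)[of r c k] level_edges_gap(1)[of r d k] level_edges_gap(2)[OF r0(2)]
      by linarith
  qed
  then have "c = d" if "(r, c) \<in> ?H" "(r, d) \<in> ?H" for r c d
    using that by (meson linorder_neqE_nat)
  then show "inj_on fst ?H"
    by (rule inj_on_fstI)
qed (use finite_U finite_V in auto)

lemma card_edges_le: "card E \<le> card U + (floor_log (card V) + 1) * (card U + card V)"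
proof -
  let ?K = "{..floor_log (card V)}"
  have "E \<subseteq> final_edges \<union> (\<Union>k\<in>?K. level_edges k)"
  proof
    fix e assume "e \<in> E"
    obtain r c where e: "e = (r, c)" by fastforce
    show "e \<in> final_edges \<union> (\<Union>k\<in>?K. level_edges k)"
    proof (cases "later_nbrs r c = {}")
      case False
      then have "floor_log (gap r c) \<le> floor_log (card V)"
        using rank_next_nbr(3) \<open>e \<in> E\<close> e by (intro floor_log_le_iff) (simp add: less_imp_le)
      then show ?thesis using False \<open>e \<in> E\<close> e by (auto simp: level_edges_def)
    qed (use \<open>e \<in> E\<close> e in \<open>auto simp: final_edges_def\<close>)
  qed
  moreover have "finite final_edges" "finite (level_edges k)" for k
    by (rule finite_subset[OF _ finite_E], force simp: final_edges_def level_edges_def)+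
  ultimately have "card E \<le> card (final_edges \<union> (\<Union>k\<in>?K. level_edges k))"
    by (intro card_mono finite_UnI finite_UN_I finite_atMost)
  also have "\<dots> \<le> card final_edges + card (\<Union>k\<in>?K. level_edges k)"
    by (rule card_Un_le)
  also have "\<dots> \<le> card U + (\<Sum>k\<in>?K. card (level_edges k))"
    using card_final_edges card_UN_le[of ?K level_edges] by simp
  also have "\<dots> \<le> card U + (\<Sum>k\<in>?K. card U + card V)"
    using card_level_edges by (intro add_left_mono sum_mono)
  finally show ?thesis by simp
qed

end

section \<open>The doubling construction\<close>

definition glue :: "nat \<Rightarrow> (nat \<times> nat) set \<Rightarrow> (nat \<times> nat) set" where
  "glue N E = map_prod id (\<lambda>v. v + N) ` E \<union> map_prod (\<lambda>u. u + N) id ` E \<union> (\<lambda>u. (u, u)) ` {..<N}"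

lemma glue_subset: "E \<subseteq> {..<N} \<times> {..<N} \<Longrightarrow> glue N E \<subseteq> {..<2 * N} \<times> {..<2 * N}"
  unfolding glue_def by auto

lemma converse_map_prod_image: "(map_prod f g ` E)\<inverse> = map_prod g f ` E\<inverse>"
  by (auto simp: image_iff)

lemma glue_converse: "(glue N E)\<inverse> = glue N (E\<inverse>)"
  by (auto simp: glue_def converse_Un converse_map_prod_image)

lemma card_glue:
  assumes "E \<subseteq> {..<N} \<times> {..<N}"
  shows "card (glue N E) = 2 * card E + N"
proof -
  let ?A = "map_prod id (\<lambda>v. v + N) ` E" and ?B = "map_prod (\<lambda>u. u + N) id ` E"
    and ?D = "(\<lambda>u. (u, u)) ` {..<N}"
  have fin: "finite E" using assms by (rule finite_subset) auto
  have "card ?A = card E" "card ?B = card E"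
    by (auto intro!: card_image inj_onI)
  moreover have "card ?D = N" by (subst card_image) (auto intro: inj_onI)
  moreover have "?A \<inter> ?B = {}" "(?A \<union> ?B) \<inter> ?D = {}" using assms by auto
  ultimately show ?thesis
    using fin by (simp add: glue_def card_Un_disjoint)
qed

context
  fixes N :: nat and E :: "(nat \<times> nat) set"
  assumes E_subset: "E \<subseteq> {..<N} \<times> {..<N}"
begin

lemma glue_upper_V: "(u, v) \<in> glue N E \<Longrightarrow> N \<le> v \<Longrightarrow> u < N"
  using E_subset unfolding glue_def by auto

lemma glue_upper_U: "(u, v) \<in> glue N E \<Longrightarrow> N \<le> u \<Longrightarrow> v < N"
  using E_subset unfolding glue_def by auto

lemma glue_lower_lower: "(u, v) \<in> glue N E \<Longrightarrow> u < N \<Longrightarrow> v < N \<Longrightarrow> u = v"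
  using E_subset unfolding glue_def by auto

lemma glue_restrict_upper_V: "glue N E \<inter> {..<N} \<times> {N..} \<subseteq> map_prod id (\<lambda>v. v + N) ` E"
  using E_subset unfolding glue_def by auto

lemma glue_restrict_upper_U: "glue N E \<inter> {N..} \<times> {..<N} \<subseteq> map_prod (\<lambda>u. u + N) id ` E"
  using E_subset unfolding glue_def by auto

lemma glue_path_stays_upper_V:
  assumes path: "forward_path UNIV UNIV (glue N E) ws"
    and i: "ws ! i = Inr v" "N \<le> v" and j: "i \<le> j" "j < length ws"
  shows "ws ! j \<in> vertices {..<N} {N..}"
proof -
  have rights_upper: "N \<le> v'" if "i \<le> j'" "j' < length ws" "ws ! j' = Inr v'" for j' v'
  proof (cases "i = j'")
    case True
    then show ?thesis using that i by simp
  next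
    case False
    then have "v < v'"
      using rights_nth_less[OF forward_pathD(6)[OF path] _ that(2) i(1) that(3)] that(1) by simp
    then show ?thesis using i by simp
  qed
  show ?thesis
  proof (cases "ws ! j")
    case (Inl u)
    then have "i \<noteq> j" using i by auto
    then have "adj (glue N E) (ws ! (j - 1)) (ws ! j)"
      using forward_pathD(4)[OF path] j by simp
    then obtain v' where "ws ! (j - 1) = Inr v'" "(u, v') \<in> glue N E"
      using Inl by (auto elim: adj_cases)
    then have "u < N"
      using rights_upper[of "j - 1" v'] \<open>i \<noteq> j\<close> j glue_upper_V by simp
    then show ?thesis using Inl by simp
  next
    case (Inr v')
    then show ?thesis using rights_upper[of j v'] j by simp
  qed
qed

end

lemma glue_path_stays_upper_U:
  assumes E: "E \<subseteq> {..<N} \<times> {..<N}" and path: "forward_path UNIV UNIV (glue N E) ws"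
    and i: "ws ! i = Inl u" "N \<le> u" and j: "i \<le> j" "j < length ws"
  shows "ws ! j \<in> vertices {N..} {..<N}"
proof -
  have E': "E\<inverse> \<subseteq> {..<N} \<times> {..<N}" using E by auto
  have path': "forward_path UNIV UNIV (glue N (E\<inverse>)) (map mirror ws)"
    using path forward_path_mirror[of UNIV UNIV "glue N E" ws] by (simp add: glue_converse)
  have i': "map mirror ws ! i = Inr u" using i j by simp
  have "map mirror ws ! j \<in> vertices {..<N} {N..}"
    by (rule glue_path_stays_upper_V[OF E' path' i' i(2) j(1)]) (simp add: j(2))
  then show ?thesis using j by simp
qed

lemma glue_path_from_matching_rights_lower:
  assumes E: "E \<subseteq> {..<N} \<times> {..<N}" and path: "forward_path UNIV UNIV (glue N E) ws"
    and w0: "ws ! 0 = Inl u0" and w1: "ws ! 1 = Inr u0" and "u0 < N"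
    and v: "v \<in> set (rights ws)"
  shows "v < N"
proof -
  have "Inr v \<in> set ws" using v by (simp add: set_rights)
  then obtain j where j: "j < length ws" "ws ! j = Inr v" by (metis in_set_conv_nth)
  have "j \<noteq> 0" using j w0 by (cases "j = 0") auto
  then consider "j = 1" | "2 \<le> j" by fastforce
  then show ?thesis
  proof cases
    case 1
    then show ?thesis using j w1 \<open>u0 < N\<close> by simp
  next
    case 2
    obtain u2 where w2: "ws ! 2 = Inl u2" and e12: "(u2, u0) \<in> glue N E"
      using forward_pathD(4)[OF path, of 2] w1 2 j by (auto elim: adj_cases)
    have "u0 < u2"
      using lefts_nth_less[OF forward_pathD(5)[OF path] _ _ w0 w2] 2 j by simp
    then have "N \<le> u2"
      using glue_lower_lower[OF E e12] \<open>u0 < N\<close> by (metis not_le less_irrefl)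
    then show ?thesis
      using glue_path_stays_upper_U[OF E path w2 _ 2 j(1)] j by simp
  qed
qed

lemma glue_no_back_edge_from_Inl:
  assumes E: "E \<subseteq> {..<N} \<times> {..<N}" "no_back_edge E"
    and path: "forward_path UNIV UNIV (glue N E) ws" and w0: "ws ! 0 = Inl u0"
  shows "\<not> has_back_edge (glue N E) ws"
proof
  let ?G = "glue N E"
  assume back_edge: "has_back_edge ?G ws"
  have len: "2 \<le> length ws" by (rule forward_pathD(1)[OF path])
  then obtain v1 where w1: "ws ! 1 = Inr v1" and e01: "(u0, v1) \<in> ?G"
    using forward_pathD(4)[OF path, of 1] w0 by (auto elim: adj_cases)
  obtain x where x: "(u0, x) \<in> ?G" "v1 < x" "x \<le> Max (set (rights ws))"
    using back_edge w0 w1 by (auto simp: has_back_edge_def)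
  have back_edge_in: "has_back_edge (?G \<inter> A \<times> B) ws" if "(u0, x) \<in> A \<times> B" for A B
    using that x w0 w1 by (auto simp: has_back_edge_def)
  have shift: "strict_mono (\<lambda>n. n + N)" by (simp add: strict_mono_def)
  consider "u0 < N" "N \<le> v1" | "N \<le> u0" | "u0 < N" "v1 < N"
    using glue_upper_U[OF E(1) e01] by linarith
  then show False
  proof cases
    case 1
    have "ws ! j \<in> vertices {..<N} {N..}" if "j < length ws" for j
      using glue_path_stays_upper_V[OF E(1) path w1 \<open>N \<le> v1\<close> _ that] w0 1
      by (cases j) simp_all
    then have "set ws \<subseteq> vertices {..<N} {N..}" by (auto simp: in_set_conv_nth)
    with no_back_edge_in_region[OF no_back_edge_image[OF strict_mono_id shift E(2)]
        glue_restrict_upper_V[OF E(1)] path]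
    show False using back_edge_in 1 x(2) by simp
  next
    case 2
    have "ws ! j \<in> vertices {N..} {..<N}" if "j < length ws" for j
      using glue_path_stays_upper_U[OF E(1) path w0 2 _ that] by simp
    then have "set ws \<subseteq> vertices {N..} {..<N}" by (auto simp: in_set_conv_nth)
    with no_back_edge_in_region[OF no_back_edge_image[OF shift strict_mono_id E(2)]
        glue_restrict_upper_U[OF E(1)] path]
    show False using back_edge_in 2 glue_upper_U[OF E(1) x(1)] by simp
  next
    case 3
    then have "u0 = v1" using glue_lower_lower[OF E(1) e01] by simp
    then have w1': "ws ! 1 = Inr u0" using w1 by simp
    have "N \<le> x"
      using glue_lower_lower[OF E(1) x(1)] x(2) \<open>u0 = v1\<close> 3 by (metis not_le less_irrefl)
    have "ws ! 1 \<in> set ws" using len by (intro nth_mem) simp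
    then have "set (rights ws) \<noteq> {}" using w1 set_rights by (metis empty_iff)
    then have "Max (set (rights ws)) < N"
      using glue_path_from_matching_rights_lower[OF E(1) path w0 w1' \<open>u0 < N\<close>] Max_in by blast
    then show False using x(3) \<open>N \<le> x\<close> by simp
  qed
qed

lemma no_back_edge_glue:
  assumes E: "E \<subseteq> {..<N} \<times> {..<N}" "no_back_edge E"
  shows "no_back_edge (glue N E)"
  unfolding no_back_edge_def
proof (intro allI impI)
  fix ws assume path: "forward_path UNIV UNIV (glue N E) ws"
  show "\<not> has_back_edge (glue N E) ws"
  proof (cases "ws ! 0")
    case (Inl u0)
    then show ?thesis using glue_no_back_edge_from_Inl[OF E path] by blast
  next
    case (Inr v0)
    have E': "E\<inverse> \<subseteq> {..<N} \<times> {..<N}" "no_back_edge (E\<inverse>)"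
      using E by (auto simp: no_back_edge_converse)
    have path': "forward_path UNIV UNIV (glue N (E\<inverse>)) (map mirror ws)"
      using path forward_path_mirror[of UNIV UNIV "glue N E" ws] by (simp add: glue_converse)
    have len: "2 \<le> length ws" by (rule forward_pathD(1)[OF path])
    then have "map mirror ws ! 0 = mirror (ws ! 0)" by (auto intro!: nth_map)
    then have "map mirror ws ! 0 = Inl v0" using Inr by simp
    then have "\<not> has_back_edge (glue N (E\<inverse>)) (map mirror ws)"
      by (rule glue_no_back_edge_from_Inl[OF E' path'])
    then show ?thesis using has_back_edge_mirror[OF len, of "glue N E"] by (simp add: glue_converse)
  qed
qed

fun doubling_graph :: "nat \<Rightarrow> (nat \<times> nat) set" where
  "doubling_graph 0 = {(0, 0)}"
| "doubling_graph (Suc k) = glue (2 ^ k) (doubling_graph k)"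

lemma doubling_graph_subset: "doubling_graph k \<subseteq> {..<2 ^ k} \<times> {..<2 ^ k}"
  by (induction k) (auto dest!: glue_subset)

lemma no_back_edge_doubling_graph: "no_back_edge (doubling_graph k)"
proof (induction k)
  case 0
  show ?case by (auto simp: no_back_edge_def has_back_edge_def split: sum.splits)
next
  case (Suc k)
  then show ?case using no_back_edge_glue[OF doubling_graph_subset] by simp
qed

lemma card_doubling_graph: "2 * card (doubling_graph k) = 2 ^ k * (k + 2)"
proof (induction k)
  case (Suc k)
  then show ?case using card_glue[OF doubling_graph_subset[of k]] by (simp add: algebra_simps)
qed simp

lemma floor_log_le_log: "0 < n \<Longrightarrow> real (floor_log n) \<le> log 2 (real n)"
  by (simp add: floor_log_altdef)

lemma prbg_card_edges_le:
  assumes "prbg U V E" and pos: "0 < card U + card V"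
  shows "real (card E) \<le> real (card U + card V) * log 2 (real (card U + card V))
    + 2 * real (card U + card V)"
proof -
  define n where "n = card U + card V"
  interpret prbg_graph U V E using assms(1) by unfold_locales (auto simp: prbg_iff)
  have "floor_log (card V) \<le> floor_log n" unfolding n_def by (intro floor_log_le_iff) simp
  then have "card U + (floor_log (card V) + 1) * n \<le> n + (floor_log n + 1) * n"
    unfolding n_def by (intro add_mono mult_le_mono1) simp_all
  then have "card E \<le> n + (floor_log n + 1) * n"
    using card_edges_le unfolding n_def by linarith
  then have "real (card E) \<le> real n + (real (floor_log n) + 1) * real n"
    by (metis of_nat_add of_nat_le_iff of_nat_mult of_nat_1)
  also have "\<dots> \<le> real n + (log 2 (real n) + 1) * real n"
    using floor_log_le_log[of n] pos unfolding n_def by (intro add_left_mono mult_right_mono) auto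
  finally show ?thesis unfolding n_def by (simp add: algebra_simps)
qed

lemma prbg_with_many_edges:
  assumes "2 \<le> n"
  shows "\<exists>U V E. prbg U V E \<and> card U + card V = n \<and> 1 / 8 * real n * ln (real n) \<le> real (card E)"
proof -
  define k where "k = floor_log n - 1"
  define N :: nat where "N = 2 ^ k"
  have "1 \<le> floor_log n" using floor_log_rec[OF assms] by simp
  then have K: "floor_log n = k + 1" by (simp add: k_def)
  have lo: "2 * N \<le> n" and hi: "n < 4 * N"
    using floor_log_exp2_le[of n] floor_log_exp2_gt[of n] assms K by (simp_all add: N_def)
  define U where "U = {..<N}"
  define V where "V = {..<n - N}"
  have "doubling_graph k \<subseteq> U \<times> V"
    using doubling_graph_subset[of k] lo by (fastforce simp: U_def V_def N_def)
  then have "prbg U V (doubling_graph k)"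
    by (simp add: prbg_iff U_def V_def no_back_edge_doubling_graph)
  moreover have "card U + card V = n" using lo by (simp add: U_def V_def)
  moreover have "1 / 8 * real n * ln (real n) \<le> real (card (doubling_graph k))"
  proof -
    have "real n < real (4 * N)" using hi by (simp only: of_nat_less_iff)
    then have hi': "real n < 4 * 2 ^ k" by (simp add: N_def)
    have "ln (real n) < ln (2 ^ (k + 2))"
      using hi' assms by (subst ln_less_cancel_iff) simp_all
    also have "\<dots> = real (k + 2) * ln 2" by (rule ln_realpow)
    also have "\<dots> \<le> real (k + 2)" using ln_2_less_1 by (intro mult_left_le) auto
    finally have "real n * ln (real n) \<le> (4 * real N) * real (k + 2)"
      using hi' assms by (intro mult_mono) (auto simp: N_def)
    also have "\<dots> = 8 * real (card (doubling_graph k))"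
    proof -
      have "real (2 * card (doubling_graph k)) = real N * real (k + 2)"
        unfolding card_doubling_graph by (simp add: N_def algebra_simps)
      then show ?thesis by simp
    qed
    finally show ?thesis by simp
  qed
  ultimately show ?thesis by blast
qed

theorem theorem4p2:
  shows "(\<exists>C::real. \<forall>U V E. prbg U V E \<and> card U + card V \<ge> 2 \<longrightarrow>
            real (card E) \<le> real (card U + card V) * log 2 (real (card U + card V))
                             + C * real (card U + card V))
       \<and> (\<exists>c::real. c > 0 \<and> (\<forall>n::nat. n \<ge> 2 \<longrightarrow>
            (\<exists>U V E. prbg U V E \<and> card U + card V = n \<and>
                     real (card E) \<ge> c * real n * ln (real n))))"
proof
  show "\<exists>C::real. \<forall>U V E. prbg U V E \<and> card U + card V \<ge> 2 \<longrightarrow>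
            real (card E) \<le> real (card U + card V) * log 2 (real (card U + card V))
                             + C * real (card U + card V)"
    using prbg_card_edges_le by (intro exI[of _ 2] allI impI) fastforce
  show "\<exists>c::real. c > 0 \<and> (\<forall>n::nat. n \<ge> 2 \<longrightarrow>
            (\<exists>U V E. prbg U V E \<and> card U + card V = n \<and>
                     real (card E) \<ge> c * real n * ln (real n)))"
    using prbg_with_many_edges by (intro exI[of _ "1 / 8"]) auto
qed

end
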